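(* Fix $\varepsilon\in\mathbb{R}^n_{\ge0}$ and $\delta\in(0,1]$, and let $\mathcal{C}^\star\subseteq\mathcal{R}$ be the set of all rankings that satisfy the $(\varepsilon,\delta)$-constraint. For any non-empty subset $\mathcal{C}\subseteq\mathcal{R}$ with $\mathcal{C}\ne\mathcal{C}^\star$, at least one of the following holds: (i) there exists a matrix $W\in\mathbb{R}^{m\times n}_{\ge0}$ such that $R_{\mathcal{C}}$ does not satisfy the $(\varepsilon,\delta)$-constraint; (ii) there exists a matrix $W\in\mathbb{R}^{m\times n}_{\ge0}$ such that $\langle R_{\mathcal{C}},W\rangle\le\langle R_{\mathcal{C}^\star},W\rangle\cdot(1-\frac1n)$.
   Context: $\mathcal{R}$ is the set of rankings: matrices $R\in\{0,1\}^{m\times n}$ with $\sum_{j} R_{ij}\le 1$ for every item $i\in[m]$ and $\sum_{i} R_{ij}=1$ for every position $j\in[n]$; $\langle R,W\rangle=\sum_{i,j}R_{ij}W_{ij}$. For a non-empty $\mathcal{C}\subseteq\mathcal{R}$ and utility matrix $W$, $R_{\mathcal{C}}:=\arg\max_{R\in\mathcal{C}}\langle R,W\rangle$. Noise model: given $P\in[0,1]^{m\times p}$, the groups $G_1,\dots,G_p\subseteq[m]$ are random with $\Pr[i\in G_\ell]=P_{i\ell}$, events concerning distinct items independent; given $U\in\mathbb{Z}_+^{n\times p}$, a ranking $R$ satisfies the $(\varepsilon,\delta)$-constraint if with probability at least $1-\delta$, $\sum_{i\in G_\ell}\sum_{j=1}^kR_{ij}\le U_{k\ell}(1+\varepsilon_k)$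 for all $k\in[n],\ell\in[p]$. *)

theory Defs
  imports "HOL-Probability.Probability"
begin

text \<open>Conventions: items are indexed by 1..m, positions by 1..n, groups by 1..p.
  Matrices are functions nat => nat => _, rankings vanish outside {1..m} x {1..n}.\<close>

definition rankings :: "nat \<Rightarrow> nat \<Rightarrow> (nat \<Rightarrow> nat \<Rightarrow> nat) set" where
  "rankings m n = {R.
     (\<forall>i j. R i j \<in> {0, 1}) \<and>
     (\<forall>i j. (i \<notin> {1..m} \<or> j \<notin> {1..n}) \<longrightarrow> R i j = 0) \<and>
     (\<forall>i\<in>{1..m}. (\<Sum>j\<in>{1..n}. R i j) \<le> 1) \<and>
     (\<forall>j\<in>{1..n}. (\<Sum>i\<in>{1..m}. R i j) = 1)}"

definition inner_rw :: "nat \<Rightarrow> nat \<Rightarrow> (nat \<Rightarrow> nat \<Rightarrow> nat) \<Rightarrow> (nat \<Rightarrow> nat \<Rightarrow> real) \<Rightarrow> real" where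
  "inner_rw m n R W = (\<Sum>i\<in>{1..m}. \<Sum>j\<in>{1..n}. real (R i j) * W i j)"

text \<open>R is a maximiser of <R,W> over C (i.e. a possible value of R_C).\<close>
definition is_RC :: "nat \<Rightarrow> nat \<Rightarrow> (nat \<Rightarrow> nat \<Rightarrow> nat) set \<Rightarrow> (nat \<Rightarrow> nat \<Rightarrow> real)
    \<Rightarrow> (nat \<Rightarrow> nat \<Rightarrow> nat) \<Rightarrow> bool" where
  "is_RC m n C W R \<longleftrightarrow> R \<in> C \<and> (\<forall>R'\<in>C. inner_rw m n R' W \<le> inner_rw m n R W)"

text \<open>Noise model: item i independently draws its set of groups from the distribution Q i
  (a distribution on subsets of groups); G_l = {i. l \<in> g i}.\<close>
definition group_law :: "nat \<Rightarrow> (nat \<Rightarrow> nat set pmf) \<Rightarrow> (nat \<Rightarrow> nat set) pmf" where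
  "group_law m Q = Pi_pmf {1..m} {} Q"

definition noise_model :: "nat \<Rightarrow> nat \<Rightarrow> (nat \<Rightarrow> nat \<Rightarrow> real) \<Rightarrow> (nat \<Rightarrow> nat set pmf) \<Rightarrow> bool" where
  "noise_model m p P Q \<longleftrightarrow>
     (\<forall>i\<in>{1..m}. \<forall>l\<in>{1..p}. measure_pmf.prob (Q i) {S. l \<in> S} = P i l)"

definition sat_constraint :: "nat \<Rightarrow> nat \<Rightarrow> nat \<Rightarrow> (nat \<Rightarrow> nat set pmf) \<Rightarrow> (nat \<Rightarrow> nat \<Rightarrow> nat)
    \<Rightarrow> (nat \<Rightarrow> real) \<Rightarrow> real \<Rightarrow> (nat \<Rightarrow> nat \<Rightarrow> nat) \<Rightarrow> bool" where
  "sat_constraint m n p Q U eps \<delta> R \<longleftrightarrow>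
     measure_pmf.prob (group_law m Q)
       {g. \<forall>k\<in>{1..n}. \<forall>l\<in>{1..p}.
           (\<Sum>i\<in>{i\<in>{1..m}. l \<in> g i}. \<Sum>j\<in>{1..k}. real (R i j)) \<le> real (U k l) * (1 + eps k)}
     \<ge> 1 - \<delta>"

end

theory Submission
  imports Defs
begin

text \<open>Take as utility matrix a ranking R itself. Then \<open>\<langle>R', R\<rangle>\<close> counts the positions on
  which R' places the same item as R, so R is the unique maximiser, with value n, and every
  other ranking scores at most n - 1. If C contains a ranking R violating the constraint, then
  \<open>R\<^sub>C = R\<close> violates it. Otherwise C is a proper subset of \<open>C\<^sup>\<star>\<close>; for R in \<open>C\<^sup>\<star>\<close> but not
  in C we get \<open>\<langle>R\<^sub>C, R\<rangle> \<le> n - 1 = n (1 - 1/n) \<le> \<langle>R\<^sub>C\<^sub>\<star>, R\<rangle> (1 - 1/n)\<close>.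
  Nothing about the noise model, \<open>\<epsilon>\<close> or \<open>\<delta>\<close> is used beyond \<open>C \<noteq> C\<^sup>\<star>\<close>.\<close>

lemma rankings_entry_01: "R \<in> rankings m n \<Longrightarrow> R i j = 0 \<or> R i j = 1"
  unfolding rankings_def by auto

lemma rankings_outside_zero:
  "R \<in> rankings m n \<Longrightarrow> i \<notin> {1..m} \<or> j \<notin> {1..n} \<Longrightarrow> R i j = 0"
  unfolding rankings_def by auto

lemma rankings_column_sum:
  "R \<in> rankings m n \<Longrightarrow> j \<in> {1..n} \<Longrightarrow> (\<Sum>i\<in>{1..m}. R i j) = 1"
  unfolding rankings_def by auto

lemma rankings_column_unique:
  assumes R: "R \<in> rankings m n" and j: "j \<in> {1..n}" and i: "i \<in> {1..m}" "R i j = 1"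
    and i': "i' \<in> {1..m}" "i' \<noteq> i"
  shows "R i' j = 0"
proof -
  have "(\<Sum>k\<in>{1..m}. R k j) = R i j + (\<Sum>k\<in>{1..m}-{i}. R k j)"
    using i by (simp add: sum.remove)
  then have "(\<Sum>k\<in>{1..m}-{i}. R k j) = 0"
    using rankings_column_sum[OF R j] i by simp
  then show ?thesis using i' by simp
qed

lemma rankings_eqI:
  assumes R: "R \<in> rankings m n" and R': "R' \<in> rankings m n"
    and common: "\<And>j. j \<in> {1..n} \<Longrightarrow> \<exists>k\<in>{1..m}. R k j = 1 \<and> R' k j = 1"
  shows "R' = R"
proof (intro ext)
  fix i j
  show "R' i j = R i j"
  proof (cases "i \<in> {1..m} \<and> j \<in> {1..n}")
    case False
    then show ?thesis using rankings_outside_zero[OF R] rankings_outside_zero[OF R'] by auto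
  next
    case True
    then obtain k where k: "k \<in> {1..m}" "R k j = 1" "R' k j = 1" using common by blast
    then show ?thesis
      using True rankings_column_unique[OF R _ k(1,2)] rankings_column_unique[OF R' _ k(1,3)]
      by (cases "i = k") auto
  qed
qed

definition weights_of :: "(nat \<Rightarrow> nat \<Rightarrow> nat) \<Rightarrow> nat \<Rightarrow> nat \<Rightarrow> real" where
  "weights_of R = (\<lambda>i j. real (R i j))"

lemma weights_of_nonneg: "0 \<le> weights_of R i j"
  unfolding weights_of_def by simp

lemma inner_rw_weights_of:
  "inner_rw m n R' (weights_of R) = real (\<Sum>j\<in>{1..n}. \<Sum>i\<in>{1..m}. R' i j * R i j)"
  unfolding inner_rw_def weights_of_def by (simp only: of_nat_sum of_nat_mult) (rule sum.swap)

lemma column_overlap_le_1: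
  assumes R: "R \<in> rankings m n" and R': "R' \<in> rankings m n" and j: "j \<in> {1..n}"
  shows "(\<Sum>i\<in>{1..m}. R' i j * R i j) \<le> 1"
proof -
  have "(\<Sum>i\<in>{1..m}. R' i j * R i j) \<le> (\<Sum>i\<in>{1..m}. R i j)"
    by (rule sum_mono) (metis rankings_entry_01[OF R'] mult_1 mult_zero_left order_refl zero_le)
  then show ?thesis using rankings_column_sum[OF R j] by simp
qed

lemma overlap_self:
  assumes R: "R \<in> rankings m n"
  shows "(\<Sum>j\<in>{1..n}. \<Sum>i\<in>{1..m}. R i j * R i j) = n"
proof -
  have "(\<Sum>i\<in>{1..m}. R i j * R i j) = 1" if "j \<in> {1..n}" for j
  proof -
    have "(\<Sum>i\<in>{1..m}. R i j * R i j) = (\<Sum>i\<in>{1..m}. R i j)"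
      by (rule sum.cong) (use rankings_entry_01[OF R] in auto)
    then show ?thesis using rankings_column_sum[OF R that] by simp
  qed
  then show ?thesis by simp
qed

lemma overlap_ge_card_imp_eq:
  assumes R: "R \<in> rankings m n" and R': "R' \<in> rankings m n"
    and ge: "n \<le> (\<Sum>j\<in>{1..n}. \<Sum>i\<in>{1..m}. R' i j * R i j)"
  shows "R' = R"
  using R R'
proof (rule rankings_eqI)
  fix j assume j: "j \<in> {1..n}"
  have "(\<Sum>i\<in>{1..m}. R' i j * R i j) = 1"
  proof (rule ccontr)
    assume "(\<Sum>i\<in>{1..m}. R' i j * R i j) \<noteq> 1"
    then have "(\<Sum>i\<in>{1..m}. R' i j * R i j) < 1"
      using column_overlap_le_1[OF R R' j] by linarith
    then have "\<exists>j\<in>{1..n}. (\<Sum>i\<in>{1..m}. R' i j * R i j) < 1"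
      using j by blast
    then have "(\<Sum>j\<in>{1..n}. \<Sum>i\<in>{1..m}. R' i j * R i j) < (\<Sum>j\<in>{1..n}. 1)"
      using column_overlap_le_1[OF R R']
      by (intro sum_strict_mono_ex1[of "{1..n}" _ "\<lambda>_. 1"]) auto
    then show False using ge by simp
  qed
  then obtain k where k: "k \<in> {1..m}" "R' k j * R k j \<noteq> 0"
    by (metis (mono_tags, lifting) sum.neutral zero_neq_one)
  then show "\<exists>k\<in>{1..m}. R k j = 1 \<and> R' k j = 1"
    using rankings_entry_01[OF R] rankings_entry_01[OF R'] by (metis mult_zero_left mult_zero_right)
qed

lemma inner_rw_weights_of_self:
  "R \<in> rankings m n \<Longrightarrow> inner_rw m n R (weights_of R) = real n"
  unfolding inner_rw_weights_of by (simp only: overlap_self)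

lemma inner_rw_weights_of_ne:
  assumes R: "R \<in> rankings m n" and R': "R' \<in> rankings m n" and "R' \<noteq> R"
  shows "inner_rw m n R' (weights_of R) \<le> real n - 1"
proof -
  have "(\<Sum>j\<in>{1..n}. \<Sum>i\<in>{1..m}. R' i j * R i j) + 1 \<le> n"
    using overlap_ge_card_imp_eq[OF R R'] \<open>R' \<noteq> R\<close> by fastforce
  then show ?thesis
    unfolding inner_rw_weights_of by (metis of_nat_1 of_nat_add of_nat_le_iff le_diff_eq)
qed

lemma is_RC_weights_of_ge_card:
  assumes "is_RC m n C (weights_of R) RC" and "R \<in> C" and "C \<subseteq> rankings m n"
  shows "real n \<le> inner_rw m n RC (weights_of R)"
  using assms inner_rw_weights_of_self unfolding is_RC_def by fastforce

lemma is_RC_weights_of_self: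
  assumes RC: "is_RC m n C (weights_of R) RC" and "R \<in> C" and C: "C \<subseteq> rankings m n"
  shows "RC = R"
proof (rule ccontr)
  assume "RC \<noteq> R"
  moreover have "RC \<in> rankings m n" using RC C unfolding is_RC_def by blast
  ultimately have "inner_rw m n RC (weights_of R) \<le> real n - 1"
    using assms inner_rw_weights_of_ne by blast
  then show False using is_RC_weights_of_ge_card[OF assms] by linarith
qed

lemma card_minus_one_le_scaled:
  fixes x :: real
  assumes "real n \<le> x"
  shows "real n - 1 \<le> x * (1 - 1 / real n)"
proof (cases "n = 0")
  case False
  then have "real n - 1 = real n * (1 - 1 / real n)" by (simp add: field_simps)
  also have "\<dots> \<le> x * (1 - 1 / real n)"
    using assms False by (intro mult_right_mono) simp_all
  finally show ?thesis .
qed (use assms in simp)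

theorem proposition7p2:
  fixes m n p :: nat
    and P :: "nat \<Rightarrow> nat \<Rightarrow> real"
    and Q :: "nat \<Rightarrow> nat set pmf"
    and U :: "nat \<Rightarrow> nat \<Rightarrow> nat"
    and eps :: "nat \<Rightarrow> real"
    and \<delta> :: real
    and C :: "(nat \<Rightarrow> nat \<Rightarrow> nat) set"
  assumes P_range: "\<forall>i\<in>{1..m}. \<forall>l\<in>{1..p}. 0 \<le> P i l \<and> P i l \<le> 1"
    and noise: "noise_model m p P Q"
    and eps_nonneg: "\<forall>k\<in>{1..n}. 0 \<le> eps k"
    and delta: "0 < \<delta>" "\<delta> \<le> 1"
    and C_sub: "C \<subseteq> rankings m n"
    and C_ne: "C \<noteq> {}"
    and C_neq: "C \<noteq> {R \<in> rankings m n. sat_constraint m n p Q U eps \<delta> R}"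
  shows "(\<exists>W. (\<forall>i j. 0 \<le> W i j) \<and>
            (\<forall>RC. is_RC m n C W RC \<longrightarrow> \<not> sat_constraint m n p Q U eps \<delta> RC))
       \<or> (\<exists>W. (\<forall>i j. 0 \<le> W i j) \<and>
            (\<forall>RC Rs. is_RC m n C W RC \<longrightarrow>
               is_RC m n {R \<in> rankings m n. sat_constraint m n p Q U eps \<delta> R} W Rs \<longrightarrow>
               inner_rw m n RC W \<le> inner_rw m n Rs W * (1 - 1 / real n)))"
proof (cases "\<exists>R\<in>C. \<not> sat_constraint m n p Q U eps \<delta> R")
  case True
  then obtain R where "R \<in> C" "\<not> sat_constraint m n p Q U eps \<delta> R" by blast
  then show ?thesis
    using is_RC_weights_of_self[OF _ _ C_sub] weights_of_nonneg by (intro disjI1 exI[of _ "weights_of R"]) blast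
next
  case False
  let ?Cstar = "{R \<in> rankings m n. sat_constraint m n p Q U eps \<delta> R}"
  obtain R where R: "R \<in> ?Cstar" "R \<notin> C" using False C_sub C_neq by blast
  have "inner_rw m n RC (weights_of R) \<le> inner_rw m n Rs (weights_of R) * (1 - 1 / real n)"
    if RC: "is_RC m n C (weights_of R) RC" and Rs: "is_RC m n ?Cstar (weights_of R) Rs" for RC Rs
  proof -
    have "RC \<in> C" using RC unfolding is_RC_def by blast
    then have "inner_rw m n RC (weights_of R) \<le> real n - 1"
      using R C_sub by (intro inner_rw_weights_of_ne) auto
    also have "\<dots> \<le> inner_rw m n Rs (weights_of R) * (1 - 1 / real n)"
      using is_RC_weights_of_ge_card[OF Rs R(1)] by (intro card_minus_one_le_scaled) blast
    finally show ?thesis .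
  qed
  then show ?thesis using weights_of_nonneg by (intro disjI2 exI[of _ "weights_of R"]) blast
qed

end
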